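(* For every set of formulas $\Gamma$ and every formula $\alpha$: if $\Gamma\vdash_{L_1^0}\alpha$ then $\Gamma\vDash_{\mathcal{M}_1^0}\alpha$.
   Context: Formulas are built from a countable set of propositional variables using the unary connectives $\neg$ (negation) and $\circ$ (consistency) and the binary connectives $\land,\lor,\to$. Write $\circ^0\alpha=\alpha$, $\circ^{m+1}\alpha=\circ(\circ^m\alpha)$. The Hilbert calculus mbC has as axiom schemas those of a standard axiomatization of positive classical propositional logic in $\land,\lor,\to$, plus (TND) $\alpha\lor\neg\alpha$ and (bc1) $\circ\alpha\to(\alpha\to(\neg\alpha\to\beta))$; its only rule is modus ponens. mbCciw is mbC plus (ciw) $\circ\alpha\lor(\alpha\land\neg\alpha)$. $L_1^0$ is mbCciw plus the schema $\circ\circ\circ\alpha$. $\Gamma\vdash_L\alpha$ means $\alpha$ is derivable from $\Gamma$ in $L$. Semantics: on $\{0,1\}$ use the Boolean operations $\land,\lor,\to,\sim$ (complement). Let $\mathbb{B}_1^0=\{x=(x_1,x_2,x_3)\in\{0,1\}^3: x_1\lor x_2=1 \text{ and } x_3\lor\sim(x_1\land x_2)=1\}$. The multialgebra $\mathcal{B}_1^0$ on $\mathbb{B}_1^0$ has multioperations $x\# y=\{z\in\mathbb{B}_1^0: z_1=x_1\# y_1\}$ for $\#\in\{\land,\lor,\to\}$, $\neg x=\{z\in\mathbb{B}_1^0: z_1=x_2\}$, $\circ x=\{(\sim(x_1\land x_2),\,x_3,\,x_3\land\sim(x_1\land x_2))\}$. Designated set $D_1^0=\{x: x_1=1\}$;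 $\mathcal{M}_1^0=(\mathcal{B}_1^0,D_1^0)$. A valuation over $\mathcal{M}_1^0$ is a map $h$ from formulas to $\mathbb{B}_1^0$ with $h(\alpha\#\beta)\in h(\alpha)\# h(\beta)$, $h(\neg\alpha)\in\neg h(\alpha)$, $h(\circ\alpha)\in\circ h(\alpha)$. $\Gamma\vDash_{\mathcal{M}_1^0}\alpha$ iff every valuation $h$ with $h[\Gamma]\subseteq D_1^0$ has $h(\alpha)\in D_1^0$. *)

theory Defs
  imports Main
begin

datatype fm =
    Var nat
  | Neg fm
  | Circ fm
  | And fm fm
  | Or fm fm
  | Imp fm fm

inductive is_axiom :: "fm \<Rightarrow> bool" where
  Ax1: "is_axiom (Imp a (Imp b a))"
| Ax2: "is_axiom (Imp (Imp a b) (Imp (Imp a (Imp b c)) (Imp a c)))"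
| Ax3: "is_axiom (Imp a (Imp b (And a b)))"
| Ax4: "is_axiom (Imp (And a b) a)"
| Ax5: "is_axiom (Imp (And a b) b)"
| Ax6: "is_axiom (Imp a (Or a b))"
| Ax7: "is_axiom (Imp b (Or a b))"
| Ax8: "is_axiom (Imp (Imp a c) (Imp (Imp b c) (Imp (Or a b) c)))"
| Ax9: "is_axiom (Or a (Imp a b))"
| TND: "is_axiom (Or a (Neg a))"
| bc1: "is_axiom (Imp (Circ a) (Imp a (Imp (Neg a) b)))"
| ciw: "is_axiom (Or (Circ a) (And a (Neg a)))"
| circ3: "is_axiom (Circ (Circ (Circ a)))"

inductive derivable :: "fm set \<Rightarrow> fm \<Rightarrow> bool" where
  hyp: "a \<in> \<Gamma> \<Longrightarrow> derivable \<Gamma> a"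
| ax: "is_axiom a \<Longrightarrow> derivable \<Gamma> a"
| mp: "derivable \<Gamma> a \<Longrightarrow> derivable \<Gamma> (Imp a b) \<Longrightarrow> derivable \<Gamma> b"

type_synonym tri = "bool \<times> bool \<times> bool"

definition B10 :: "tri set" where
  "B10 = {(x1, x2, x3). (x1 \<or> x2) \<and> (x3 \<or> \<not> (x1 \<and> x2))}"

definition m_and :: "tri \<Rightarrow> tri \<Rightarrow> tri set" where
  "m_and x y = {z \<in> B10. fst z = (fst x \<and> fst y)}"

definition m_or :: "tri \<Rightarrow> tri \<Rightarrow> tri set" where
  "m_or x y = {z \<in> B10. fst z = (fst x \<or> fst y)}"

definition m_imp :: "tri \<Rightarrow> tri \<Rightarrow> tri set" where
  "m_imp x y = {z \<in> B10. fst z = (fst x \<longrightarrow> fst y)}"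

definition m_neg :: "tri \<Rightarrow> tri set" where
  "m_neg x = {z \<in> B10. fst z = fst (snd x)}"

definition m_circ :: "tri \<Rightarrow> tri set" where
  "m_circ x = (case x of (x1, x2, x3) \<Rightarrow> {(\<not> (x1 \<and> x2), x3, x3 \<and> \<not> (x1 \<and> x2))})"

definition D10 :: "tri set" where
  "D10 = {x \<in> B10. fst x}"

definition valuation :: "(fm \<Rightarrow> tri) \<Rightarrow> bool" where
  "valuation h \<longleftrightarrow>
     (\<forall>a. h a \<in> B10) \<and>
     (\<forall>a b. h (And a b) \<in> m_and (h a) (h b)) \<and>
     (\<forall>a b. h (Or a b) \<in> m_or (h a) (h b)) \<and>
     (\<forall>a b. h (Imp a b) \<in> m_imp (h a) (h b)) \<and>
     (\<forall>a. h (Neg a) \<in> m_neg (h a)) \<and>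
     (\<forall>a. h (Circ a) \<in> m_circ (h a))"

definition entails :: "fm set \<Rightarrow> fm \<Rightarrow> bool" where
  "entails \<Gamma> a \<longleftrightarrow> (\<forall>h. valuation h \<longrightarrow> h ` \<Gamma> \<subseteq> D10 \<longrightarrow> h a \<in> D10)"

end

theory Submission
  imports Defs
begin

(* Soundness by induction on derivations: a valuation acts classically on first coordinates
   for the positive connectives, so designation is preserved by modus ponens and the positive
   axioms are designated. Of the remaining axioms, TND holds because every element of B10
   satisfies x1 \<or> x2, and bc1 and ciw because \<circ>x is designated exactly when x1 and x2
   are not both true. Finally, every y = \<circ>x has y3 = y1 \<and> y2, so z = \<circ>y has z2 = \<not> z1,
   and therefore \<circ>z is designated. *)

definition circ_fun :: "tri \<Rightarrow> tri" where
  "circ_fun = (\<lambda>(x1, x2, x3). (\<not> (x1 \<and> x2), x3, x3 \<and> \<not> (x1 \<and> x2)))"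

lemma m_circ_eq_singleton: "m_circ x = {circ_fun x}"
  unfolding m_circ_def circ_fun_def by (simp split: prod.split)

lemma fst_circ_fun: "fst (circ_fun x) \<longleftrightarrow> \<not> (fst x \<and> fst (snd x))"
  unfolding circ_fun_def by (simp split: prod.split)

lemma snd_snd_circ_fun: "snd (snd (circ_fun x)) \<longleftrightarrow> fst (circ_fun x) \<and> fst (snd (circ_fun x))"
  unfolding circ_fun_def by (auto split: prod.split)

lemma fst_snd_circ_fun: "fst (snd (circ_fun x)) \<longleftrightarrow> snd (snd x)"
  unfolding circ_fun_def by (simp split: prod.split)

lemma fst_circ_fun_circ_fun_circ_fun: "fst (circ_fun (circ_fun (circ_fun x)))"
  by (auto simp: fst_circ_fun fst_snd_circ_fun snd_snd_circ_fun)

lemma B10_fst_or_fst_snd: "x \<in> B10 \<Longrightarrow> fst x \<or> fst (snd x)"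
  unfolding B10_def by auto

lemma
  assumes "valuation h"
  shows valuation_in_B10: "h a \<in> B10"
    and valuation_And: "fst (h (And a b)) \<longleftrightarrow> fst (h a) \<and> fst (h b)"
    and valuation_Or: "fst (h (Or a b)) \<longleftrightarrow> fst (h a) \<or> fst (h b)"
    and valuation_Imp: "fst (h (Imp a b)) \<longleftrightarrow> (fst (h a) \<longrightarrow> fst (h b))"
    and valuation_Neg: "fst (h (Neg a)) \<longleftrightarrow> fst (snd (h a))"
    and valuation_Circ: "h (Circ a) = circ_fun (h a)"
  using assms m_circ_eq_singleton
  unfolding valuation_def m_and_def m_or_def m_imp_def m_neg_def by auto

lemma valuation_D10_iff: "valuation h \<Longrightarrow> h a \<in> D10 \<longleftrightarrow> fst (h a)"
  unfolding D10_def using valuation_in_B10 by blast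

lemma axiom_designated:
  assumes h: "valuation h" and "is_axiom a"
  shows "fst (h a)"
  using \<open>is_axiom a\<close>
proof cases
  case TND
  then show ?thesis
    using B10_fst_or_fst_snd[OF valuation_in_B10[OF h]] by (simp add: h valuation_Or valuation_Neg)
next
  case bc1
  then show ?thesis by (simp add: h valuation_Imp valuation_Neg valuation_Circ fst_circ_fun)
next
  case ciw
  then show ?thesis
    by (simp add: h valuation_Or valuation_And valuation_Neg valuation_Circ fst_circ_fun)
next
  case circ3
  then show ?thesis by (simp add: h valuation_Circ fst_circ_fun_circ_fun_circ_fun)
qed (auto simp: h valuation_And valuation_Or valuation_Imp)

lemma derivable_designated:
  assumes "derivable \<Gamma> a" and h: "valuation h" and "h ` \<Gamma> \<subseteq> D10"
  shows "fst (h a)"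
  using assms(1,3)
proof (induction rule: derivable.induct)
  case hyp
  then show ?case by (auto simp: D10_def)
next
  case ax
  then show ?case using axiom_designated[OF h] by blast
next
  case mp
  then show ?case by (simp add: h valuation_Imp)
qed

theorem theorem2:
  fixes \<Gamma> :: "fm set" and \<alpha> :: fm
  assumes "derivable \<Gamma> \<alpha>"
  shows "entails \<Gamma> \<alpha>"
  unfolding entails_def
  using derivable_designated[OF assms] valuation_D10_iff by blast

end
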